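(* Let $k\ge 0$ and let $a_i\ge b_i\ge 0$ be integers for $i=0,1,\dots,k$. Suppose that, at some moment of a game on $K_{\mathbb N}$ in which in each round Builder selects an unselected edge and Painter colours it red or blue, the coloured graph $G$ of already coloured edges contains vertex-disjoint paths $P(a_0,b_0),P(a_1,b_1),\dots,P(a_k,b_k)$. Then Builder can force, within at most $2k$ further rounds, either a red $C_3$ or a blue path on $a_0+\sum_{i=1}^k b_i$ vertices.
   Context: For integers $s,t>0$, $P(s,t)$ denotes the coloured path on $s+t$ vertices obtained from two vertex-disjoint blue paths on $s$ and $t$ vertices by joining an end of one to an end of the other by a red edge; $P(s,0)$ denotes a blue path on $s$ vertices. "Builder can force within $r$ rounds" means Builder has a strategy for selecting edges such that, whatever Painter does, after at most $r$ more rounds the coloured graph contains the stated structure. *)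

theory Defs
  imports Main
begin

datatype colour = Red | Blue

text \<open>A coloured graph on vertex set N: a partial map from edges (2-element
  vertex sets) to colours; None means the edge is not yet selected/coloured.\<close>
type_synonym cgraph = "nat set \<Rightarrow> colour option"

definition valid_state :: "cgraph \<Rightarrow> bool" where
  "valid_state G \<longleftrightarrow> finite (dom G) \<and> (\<forall>e\<in>dom G. \<exists>u v. u \<noteq> v \<and> e = {u, v})"

text \<open>The vertex list vs spans a copy of P(s,t) in G: a blue path on the
  first s vertices, a red edge between positions s-1 and s, then a blue path
  on the last t vertices; for t = 0 it is a blue path on s vertices.\<close>
definition has_P :: "cgraph \<Rightarrow> nat \<Rightarrow> nat \<Rightarrow> nat list \<Rightarrow> bool" where
  "has_P G s t vs \<longleftrightarrow> distinct vs \<and> length vs = s + t \<and>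
     (\<forall>j. Suc j < s + t \<longrightarrow>
        G {vs ! j, vs ! Suc j} = Some (if Suc j = s then Red else Blue))"

definition has_blue_path :: "cgraph \<Rightarrow> nat \<Rightarrow> bool" where
  "has_blue_path G n \<longleftrightarrow> (\<exists>vs. distinct vs \<and> length vs = n \<and>
     (\<forall>j. Suc j < n \<longrightarrow> G {vs ! j, vs ! Suc j} = Some Blue))"

definition has_red_C3 :: "cgraph \<Rightarrow> bool" where
  "has_red_C3 G \<longleftrightarrow> (\<exists>x y z. x \<noteq> y \<and> y \<noteq> z \<and> x \<noteq> z \<and>
     G {x, y} = Some Red \<and> G {y, z} = Some Red \<and> G {x, z} = Some Red)"

primrec forces :: "nat \<Rightarrow> cgraph \<Rightarrow> (cgraph \<Rightarrow> bool) \<Rightarrow> bool" where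
  "forces 0 G Q \<longleftrightarrow> Q G"
| "forces (Suc r) G Q \<longleftrightarrow> Q G \<or>
     (\<exists>u v. u \<noteq> v \<and> G {u, v} = None \<and>
        (\<forall>c. forces r (G({u, v} := Some c)) Q))"

end

theory Submission
  imports Defs
begin

text \<open>Starting from the blue part of P(a_0, b_0), the paths P(a_i, b_i), i \<ge> 1, are absorbed
  one at a time into a growing blue path q, two rounds each. Let u be the last vertex of q and
  vw the red edge of P(a_i, b_i), where v ends its blue part on a_i vertices and w starts its
  blue part on b_i vertices. Builder selects uv and then uw. If uv is blue, q continues through
  v backwards along b_i \<le> a_i vertices of the first part; if uw is blue, q continues along the
  second part; if both are red, uvw is a red triangle.\<close>

lemma map_le_SomeD: "m \<subseteq>\<^sub>m m' \<Longrightarrow> m x = Some y \<Longrightarrow> m' x = Some y"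
  by (force simp: map_le_def)

lemma successively_take: "successively P xs \<Longrightarrow> successively P (take n xs)"
  using successively_append_iff[of P "take n xs" "drop n xs"] by simp

definition blue_edge :: "cgraph \<Rightarrow> nat \<Rightarrow> nat \<Rightarrow> bool" where
  "blue_edge G u v \<longleftrightarrow> G {u, v} = Some Blue"

definition has_blue_path_in :: "cgraph \<Rightarrow> nat \<Rightarrow> nat set \<Rightarrow> bool" where
  "has_blue_path_in G n S \<longleftrightarrow>
     (\<exists>vs. distinct vs \<and> length vs = n \<and> successively (blue_edge G) vs \<and> set vs \<subseteq> S)"

lemma blue_edge_commute: "blue_edge G u v \<longleftrightarrow> blue_edge G v u"
  by (simp add: blue_edge_def insert_commute)

lemma successively_blue_edge_rev:
  "successively (blue_edge G) (rev vs) \<longleftrightarrow> successively (blue_edge G) vs"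
proof -
  have flip: "(\<lambda>x y. blue_edge G y x) = blue_edge G"
    by (auto simp: fun_eq_iff blue_edge_commute)
  show ?thesis by (simp only: successively_rev flip)
qed

lemma successively_blue_edge_map_le:
  assumes "successively (blue_edge G) vs" "G \<subseteq>\<^sub>m H"
  shows "successively (blue_edge H) vs"
  using assms(1) by (rule successively_mono)
    (use assms(2) in \<open>simp add: blue_edge_def map_le_SomeD\<close>)

lemma has_blue_path_iff:
  "has_blue_path G n \<longleftrightarrow>
     (\<exists>vs. distinct vs \<and> length vs = n \<and> successively (blue_edge G) vs)"
  by (auto simp: has_blue_path_def successively_conv_nth blue_edge_def)

lemma has_blue_path_in_append:
  assumes "distinct q" "distinct r" "set q \<inter> set r = {}" "set q \<union> set r \<subseteq> S"
    and "successively (blue_edge G) q" "successively (blue_edge G) r"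
    and "q \<noteq> [] \<Longrightarrow> r \<noteq> [] \<Longrightarrow> blue_edge G (last q) (hd r)"
  shows "has_blue_path_in G (length q + length r) S"
  unfolding has_blue_path_in_def
  using assms by (intro exI[of _ "q @ r"]) (auto simp: successively_append_iff)

lemma has_P_map_le: "has_P G s t vs \<Longrightarrow> G \<subseteq>\<^sub>m H \<Longrightarrow> has_P H s t vs"
  unfolding has_P_def by (blast intro: map_le_SomeD)

lemma has_P_blue_prefix: "has_P G s t vs \<Longrightarrow> successively (blue_edge G) (take s vs)"
  by (auto simp: has_P_def successively_conv_nth blue_edge_def)

lemma has_P_blue_suffix: "has_P G s t vs \<Longrightarrow> successively (blue_edge G) (drop s vs)"
  by (auto simp: has_P_def successively_conv_nth blue_edge_def)

lemma has_P_red_edge: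
  assumes "has_P G s t vs" "0 < s" "0 < t"
  shows "G {vs ! (s - 1), vs ! s} = Some Red"
proof -
  have "Suc (s - 1) < s + t" "Suc (s - 1) = s"
    using assms(2,3) by auto
  with assms(1) show ?thesis
    unfolding has_P_def by (metis (full_types))
qed

lemma has_blue_path_in_via_first_part:
  assumes q: "distinct q" "successively (blue_edge G) q"
    and p: "b \<le> a" "has_P G a b p" "set q \<inter> set p = {}"
    and join: "q \<noteq> [] \<Longrightarrow> 0 < b \<Longrightarrow> blue_edge G (last q) (p ! (a - 1))"
  shows "has_blue_path_in G (length q + b) (set q \<union> set p)"
proof -
  define T where "T = take b (rev (take a p))"
  have lp: "length p = a + b" and "distinct p"
    using p(2) by (auto simp: has_P_def)
  have "successively (blue_edge G) (rev (take a p))"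
    using has_P_blue_prefix[OF p(2)] by (simp only: successively_blue_edge_rev)
  then have T: "distinct T" "successively (blue_edge G) T"
    using \<open>distinct p\<close> by (simp_all add: T_def successively_take)
  have "set T \<subseteq> set p"
    using set_take_subset[of b "rev (take a p)"] set_take_subset[of a p] by (simp add: T_def)
  have "length T = b"
    using p(1) lp by (simp add: T_def)
  have "hd T = p ! (a - 1)" if "T \<noteq> []"
    using that lp by (auto simp: T_def hd_rev last_conv_nth)
  then have "has_blue_path_in G (length q + length T) (set q \<union> set p)"
    using q T \<open>set T \<subseteq> set p\<close> \<open>length T = b\<close> p(3) join
    by (intro has_blue_path_in_append) auto
  with \<open>length T = b\<close> show ?thesis by simp
qed

lemma has_blue_path_in_via_second_part:
  assumes q: "distinct q" "successively (blue_edge G) q"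
    and p: "has_P G a b p" "set q \<inter> set p = {}"
    and join: "q \<noteq> [] \<Longrightarrow> 0 < b \<Longrightarrow> blue_edge G (last q) (p ! a)"
  shows "has_blue_path_in G (length q + b) (set q \<union> set p)"
proof -
  define B where "B = drop a p"
  have lp: "length p = a + b" and "distinct p"
    using p(1) by (auto simp: has_P_def)
  then have B: "distinct B" "successively (blue_edge G) B" "length B = b"
    using has_P_blue_suffix[OF p(1)] by (simp_all add: B_def)
  have "set B \<subseteq> set p"
    by (simp add: B_def set_drop_subset)
  have "hd B = p ! a" if "B \<noteq> []"
    using that lp by (simp add: B_def hd_drop_conv_nth)
  then have "has_blue_path_in G (length q + length B) (set q \<union> set p)"
    using q B \<open>set B \<subseteq> set p\<close> p(2) join
    by (intro has_blue_path_in_append) auto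
  with B(3) show ?thesis by simp
qed

lemma forces_if_holds: "Q G \<Longrightarrow> forces r G Q"
  by (cases r) auto

lemma forces_mono_rounds: "forces r G Q \<Longrightarrow> r \<le> r' \<Longrightarrow> forces r' G Q"
proof (induction r arbitrary: G r')
  case 0
  then show ?case by (simp add: forces_if_holds)
next
  case (Suc r)
  then obtain r'' where r': "r' = Suc r''" and "r \<le> r''"
    by (cases r') auto
  with Suc.IH Suc.prems(1) show ?case
    unfolding r' forces.simps by blast
qed

lemma forces_bind:
  "forces r G R \<Longrightarrow> (\<And>H. R H \<Longrightarrow> forces s H Q) \<Longrightarrow> forces (r + s) G Q"
proof (induction r arbitrary: G)
  case 0
  then show ?case by simp
next
  case (Suc r)
  show ?case
  proof (cases "R G")
    case True
    with Suc.prems(2) have "forces s G Q" by blast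
    then show ?thesis by (rule forces_mono_rounds) simp
  next
    case False
    with Suc.prems(1) obtain u v where "u \<noteq> v" "G {u, v} = None"
      and "\<forall>c. forces r (G({u, v} := Some c)) R"
      by auto
    with Suc.IH Suc.prems(2) show ?thesis
      unfolding add_Suc forces.simps by blast
  qed
qed

text \<open>Builder need not select an edge that is already coloured; the round is then left unused.\<close>
lemma forces_Suc_by_edge:
  assumes "u \<noteq> v" and "\<And>H c. G \<subseteq>\<^sub>m H \<Longrightarrow> H {u, v} = Some c \<Longrightarrow> forces r H Q"
  shows "forces (Suc r) G Q"
proof (cases "G {u, v}")
  case None
  then have "G \<subseteq>\<^sub>m G({u, v} := Some c)" for c
    by (auto simp: map_le_def)
  with assms None show ?thesis
    unfolding forces.simps by (metis fun_upd_same)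
next
  case (Some c)
  then have "forces r G Q" using assms(2) map_le_refl by blast
  then show ?thesis by (rule forces_mono_rounds) simp
qed

lemma forces_2_by_edges:
  assumes "u \<noteq> v" "u \<noteq> w"
    and "\<And>H. G \<subseteq>\<^sub>m H \<Longrightarrow> H {u, v} = Some Blue \<Longrightarrow> Q H"
    and "\<And>H. G \<subseteq>\<^sub>m H \<Longrightarrow> H {u, w} = Some Blue \<Longrightarrow> Q H"
    and "\<And>H. G \<subseteq>\<^sub>m H \<Longrightarrow> H {u, v} = Some Red \<Longrightarrow> H {u, w} = Some Red \<Longrightarrow> Q H"
  shows "forces 2 G Q"
  unfolding numeral_2_eq_2
proof (rule forces_Suc_by_edge[OF \<open>u \<noteq> v\<close>])
  fix H c assume GH: "G \<subseteq>\<^sub>m H" and c: "H {u, v} = Some c"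
  show "forces (Suc 0) H Q"
  proof (cases c)
    case Blue
    with assms(3) GH c show ?thesis by (simp add: forces_if_holds)
  next
    case Red
    show ?thesis
    proof (rule forces_Suc_by_edge[OF \<open>u \<noteq> w\<close>])
      fix H' c' assume HH': "H \<subseteq>\<^sub>m H'" and c': "H' {u, w} = Some c'"
      have GH': "G \<subseteq>\<^sub>m H'" using GH HH' by (rule map_le_trans)
      moreover have "H' {u, v} = Some Red"
        using map_le_SomeD[OF HH' c] Red by simp
      ultimately show "forces 0 H' Q"
        using assms(4,5) c' by (cases c') auto
    qed
  qed
qed

lemma forces_blue_path_extension:
  assumes q: "distinct q" "successively (blue_edge G) q"
    and p: "b \<le> a" "has_P G a b p" "set q \<inter> set p = {}"
  shows "forces 2 G (\<lambda>H. G \<subseteq>\<^sub>m H \<and>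
           (has_red_C3 H \<or> has_blue_path_in H (length q + b) (set q \<union> set p)))"
    (is "forces 2 G ?R")
proof -
  have via_first: "?R H"
    if "G \<subseteq>\<^sub>m H" "q \<noteq> [] \<Longrightarrow> 0 < b \<Longrightarrow> blue_edge H (last q) (p ! (a - 1))" for H
    using has_blue_path_in_via_first_part[OF q(1) successively_blue_edge_map_le[OF q(2) that(1)]
        p(1) has_P_map_le[OF p(2) that(1)] p(3) that(2)] that(1)
    by simp
  have via_second: "?R H"
    if "G \<subseteq>\<^sub>m H" "blue_edge H (last q) (p ! a)" for H
    using has_blue_path_in_via_second_part[OF q(1) successively_blue_edge_map_le[OF q(2) that(1)]
        has_P_map_le[OF p(2) that(1)] p(3)] that
    by simp
  show ?thesis
  proof (cases "q = [] \<or> b = 0")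
    case True
    then have "?R G" by (intro via_first) auto
    then show ?thesis by (rule forces_if_holds)
  next
    case False
    then have "q \<noteq> []" and "0 < b" "0 < a" using p(1) by auto
    define u v w where "u = last q" and "v = p ! (a - 1)" and "w = p ! a"
    have "distinct p" "length p = a + b"
      using p(2) by (auto simp: has_P_def)
    then have "v \<in> set p" "w \<in> set p" "v \<noteq> w"
      using \<open>0 < a\<close> \<open>0 < b\<close> by (auto simp: v_def w_def nth_eq_iff_index_eq)
    moreover have "u \<in> set q"
      using \<open>q \<noteq> []\<close> by (simp add: u_def)
    ultimately have "u \<noteq> v" "u \<noteq> w"
      using p(3) by auto
    have red_vw: "G {v, w} = Some Red"
      using has_P_red_edge[OF p(2) \<open>0 < a\<close> \<open>0 < b\<close>] by (simp add: v_def w_def)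
    show ?thesis
    proof (rule forces_2_by_edges[OF \<open>u \<noteq> v\<close> \<open>u \<noteq> w\<close>])
      fix H assume "G \<subseteq>\<^sub>m H" "H {u, v} = Some Blue"
      then show "?R H" by (intro via_first) (simp_all add: blue_edge_def u_def v_def)
    next
      fix H assume "G \<subseteq>\<^sub>m H" "H {u, w} = Some Blue"
      then show "?R H" by (intro via_second) (simp_all add: blue_edge_def u_def w_def)
    next
      fix H assume GH: "G \<subseteq>\<^sub>m H" and "H {u, v} = Some Red" "H {u, w} = Some Red"
      moreover have "H {v, w} = Some Red"
        using map_le_SomeD[OF GH red_vw] .
      ultimately have "has_red_C3 H"
        using \<open>u \<noteq> v\<close> \<open>u \<noteq> w\<close> \<open>v \<noteq> w\<close> unfolding has_red_C3_def by blast
      with GH show "?R H" by simp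
    qed
  qed
qed

lemma forces_red_C3_or_blue_path:
  assumes "finite I" and "distinct q" "successively (blue_edge G) q"
    and "\<And>i. i \<in> I \<Longrightarrow> b i \<le> a i" "\<And>i. i \<in> I \<Longrightarrow> has_P G (a i) (b i) (p i)"
    and "\<And>i. i \<in> I \<Longrightarrow> set q \<inter> set (p i) = {}"
    and "pairwise (\<lambda>i j. set (p i) \<inter> set (p j) = {}) I"
  shows "forces (2 * card I) G
           (\<lambda>H. has_red_C3 H \<or> has_blue_path H (length q + (\<Sum>i\<in>I. b i)))"
  using assms
proof (induction I arbitrary: G q rule: finite_induct)
  case empty
  then show ?case by (auto simp: has_blue_path_iff intro: forces_if_holds)
next
  case (insert j I)
  let ?Q = "\<lambda>H. has_red_C3 H \<or> has_blue_path H (length q + (\<Sum>i\<in>insert j I. b i))"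
  have "forces (2 + 2 * card I) G ?Q"
  proof (rule forces_bind)
    show "forces 2 G (\<lambda>H. G \<subseteq>\<^sub>m H \<and>
            (has_red_C3 H \<or> has_blue_path_in H (length q + b j) (set q \<union> set (p j))))"
      using insert.prems by (intro forces_blue_path_extension[where a = "a j"]) auto
  next
    fix H
    assume H: "G \<subseteq>\<^sub>m H \<and>
      (has_red_C3 H \<or> has_blue_path_in H (length q + b j) (set q \<union> set (p j)))"
    show "forces (2 * card I) H ?Q"
    proof (cases "has_red_C3 H")
      case True
      then show ?thesis by (simp add: forces_if_holds)
    next
      case False
      with H obtain q' where GH: "G \<subseteq>\<^sub>m H" and q': "distinct q'" "length q' = length q + b j"
        "successively (blue_edge H) q'" "set q' \<subseteq> set q \<union> set (p j)"
        unfolding has_blue_path_in_def by blast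
      have "forces (2 * card I) H
              (\<lambda>H. has_red_C3 H \<or> has_blue_path H (length q' + (\<Sum>i\<in>I. b i)))"
      proof (rule insert.IH)
        fix i assume "i \<in> I"
        with insert.prems(6) insert.hyps(2) have "set (p j) \<inter> set (p i) = {}"
          by (auto dest: pairwiseD)
        with insert.prems(5) \<open>i \<in> I\<close> q'(4) show "set q' \<inter> set (p i) = {}"
          by blast
        show "has_P H (a i) (b i) (p i)"
          using insert.prems(4) \<open>i \<in> I\<close> GH by (blast intro: has_P_map_le)
        show "b i \<le> a i"
          using insert.prems(3) \<open>i \<in> I\<close> by blast
      next
        show "pairwise (\<lambda>i j. set (p i) \<inter> set (p j) = {}) I"
          using insert.prems(6) by (rule pairwise_subset) blast
      qed (fact q')+
      with insert.hyps q'(2) show ?thesis by (simp add: add.assoc)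
    qed
  qed
  with insert.hyps show ?case by simp
qed

theorem lemma2:
  fixes k :: nat and a b :: "nat \<Rightarrow> nat" and G :: cgraph
    and p :: "nat \<Rightarrow> nat list"
  assumes "valid_state G"
    and "\<And>i. i \<le> k \<Longrightarrow> b i \<le> a i"
    and "\<And>i. i \<le> k \<Longrightarrow> has_P G (a i) (b i) (p i)"
    and "\<And>i j. i \<le> k \<Longrightarrow> j \<le> k \<Longrightarrow> i \<noteq> j \<Longrightarrow> set (p i) \<inter> set (p j) = {}"
  shows "forces (2 * k) G
           (\<lambda>H. has_red_C3 H \<or> has_blue_path H (a 0 + (\<Sum>i=1..k. b i)))"
proof -
  define q where "q = take (a 0) (p 0)"
  from assms(3) have "has_P G (a 0) (b 0) (p 0)" by simp
  then have q: "distinct q" "length q = a 0" "successively (blue_edge G) q"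
    by (auto simp: q_def has_P_def has_P_blue_prefix)
  have "forces (2 * card {1..k}) G
          (\<lambda>H. has_red_C3 H \<or> has_blue_path H (length q + (\<Sum>i\<in>{1..k}. b i)))"
  proof (rule forces_red_C3_or_blue_path[where a = a])
    fix i assume "i \<in> {1..k}"
    then show "set q \<inter> set (p i) = {}"
      using assms(4)[of 0 i] set_take_subset[of "a 0" "p 0"] by (auto simp: q_def)
  next
    show "pairwise (\<lambda>i j. set (p i) \<inter> set (p j) = {}) {1..k}"
      using assms(4) by (auto simp: pairwise_def)
  qed (use q assms(2,3) in auto)
  with q(2) show ?thesis by simp
qed

end
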